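(* Let $m\ge 2$. The following random substitution subshifts are semi-mixing: (1) the random Fibonacci subshift $X_1 = X_{\vartheta_1}$, with respect to $\mathcal{S}_1=\{ab,ba\}$; (2) the random tribonacci subshift $X_\tau$, with respect to $\mathcal{S}_\tau=\{ab,ba,ac,ca\}$; (3) the degree-$m$ random metallic mean subshift $X_m = X_{\vartheta_m}$, with respect to $\mathcal{S}_m=\{a^iba^{m-i}\mid 0\le i\le m\}$.
   Context: Words: for a finite alphabet $\mathcal{A}$, $\mathcal{A}^+$ is the set of non-empty finite words; $u^i$ is the $i$-fold concatenation ($u^0$ the empty word); $v\prec w$ means $v$ is a (contiguous) subword of $w$. For sets of words $A,B$, $AB=\{uv\mid u\in A, v\in B\}$. A random substitution is a map $\vartheta$ assigning to each letter $a\in\mathcal{A}$ a non-empty finite set $\vartheta(a)\subseteq\mathcal{A}^+$; it is extended to words by $\vartheta(w_1\cdots w_k)=\vartheta(w_1)\cdots\vartheta(w_k)$ (set concatenation) and to sets by $\vartheta(A)=\bigcup_{w\in A}\vartheta(w)$; $\vartheta^k$ denotes the $k$-fold iterate. A word $u$ is $\vartheta$-legal if there are $k\ge 0$, a letter $a$ and $w\in\vartheta^k(a)$ with $u\prec w$. The RS-subshift is $X_\vartheta=\{x\in\mathcal{A}^{\mathbb{Z}}\mid \text{every finite subword of } x \text{ is } \vartheta\text{-legal}\}$ with the left shift $\sigma$. Its language $\mathcal{L}$ is the set of all finite subwords of elements of $X_\vartheta$, and $\mathcal{L}^\ell$ the set of those of length $\ell$. Semi-mixing (symbolic form, equivalent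 to the dynamical definition: there is a proper clopen $U$ such that for every nonempty open $V$ there is $N$ with $\sigma^n(V)\cap U\neq\varnothing$ for all $n\ge N$): a subshift is semi-mixing with respect to a set $\mathcal{S}\subsetneq\mathcal{L}^\ell$ (for some length $\ell$) if for every $w\in\mathcal{L}$ there is $N\in\mathbb{N}$ such that for every $n\ge N$ there exist a word $u$ of length $n$ and $s\in\mathcal{S}$ with $wus\in\mathcal{L}$. Random Fibonacci substitution on $\{a,b\}$: $\vartheta_1\colon a\mapsto\{ab,ba\},\ b\mapsto\{a\}$. Random tribonacci substitution on $\{a,b,c\}$: $\tau\colon a\mapsto\{ab,ba\},\ b\mapsto\{ac,ca\},\ c\mapsto\{a\}$. Degree-$m$ random metallic mean substitution on $\{a,b\}$: $\vartheta_m\colon a\mapsto\{a^iba^{m-i}\mid 0\le i\le m\},\ b\mapsto\{a\}$. *)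

theory Defs
  imports Main "HOL-Library.Sublist"
begin

text \<open>Random substitutions: each letter is mapped to a nonempty finite set of
nonempty words (words are lists).\<close>

fun subst_word :: "('a \<Rightarrow> 'a list set) \<Rightarrow> 'a list \<Rightarrow> 'a list set" where
  "subst_word \<theta> [] = {[]}"
| "subst_word \<theta> (x # xs) = {u @ v | u v. u \<in> \<theta> x \<and> v \<in> subst_word \<theta> xs}"

definition subst_set :: "('a \<Rightarrow> 'a list set) \<Rightarrow> 'a list set \<Rightarrow> 'a list set" where
  "subst_set \<theta> A = (\<Union>w\<in>A. subst_word \<theta> w)"

definition subst_pow :: "('a \<Rightarrow> 'a list set) \<Rightarrow> nat \<Rightarrow> 'a list set \<Rightarrow> 'a list set" where
  "subst_pow \<theta> k A = (subst_set \<theta> ^^ k) A"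

definition legal :: "('a \<Rightarrow> 'a list set) \<Rightarrow> 'a list \<Rightarrow> bool" where
  "legal \<theta> u \<longleftrightarrow> (\<exists>k a w. w \<in> subst_pow \<theta> k {[a]} \<and> sublist u w)"

definition window :: "(int \<Rightarrow> 'a) \<Rightarrow> int \<Rightarrow> nat \<Rightarrow> 'a list" where
  "window x i n = map (\<lambda>j. x (i + int j)) [0..<n]"

definition RS_subshift :: "('a \<Rightarrow> 'a list set) \<Rightarrow> (int \<Rightarrow> 'a) set" where
  "RS_subshift \<theta> = {x. \<forall>i n. legal \<theta> (window x i n)}"

definition RS_language :: "('a \<Rightarrow> 'a list set) \<Rightarrow> 'a list set" where
  "RS_language \<theta> = {window x i n | x i n. x \<in> RS_subshift \<theta>}"

definition semi_mixing_wrt :: "('a \<Rightarrow> 'a list set) \<Rightarrow> 'a list set \<Rightarrow> bool" where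
  "semi_mixing_wrt \<theta> S \<longleftrightarrow>
     (\<exists>l. S \<subset> {w \<in> RS_language \<theta>. length w = l}) \<and>
     (\<forall>w \<in> RS_language \<theta>. \<exists>N. \<forall>n \<ge> N. \<exists>u s. length u = n \<and> s \<in> S \<and>
        w @ u @ s \<in> RS_language \<theta>)"

datatype ab = a | b
datatype abc = A | B | C

fun fib_subst :: "ab \<Rightarrow> ab list set" where
  "fib_subst a = {[a, b], [b, a]}"
| "fib_subst b = {[a]}"

fun trib_subst :: "abc \<Rightarrow> abc list set" where
  "trib_subst A = {[A, B], [B, A]}"
| "trib_subst B = {[A, C], [C, A]}"
| "trib_subst C = {[A]}"

fun metal_subst :: "nat \<Rightarrow> ab \<Rightarrow> ab list set" where
  "metal_subst m a = {replicate i a @ [b] @ replicate (m - i) a | i. i \<le> m}"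
| "metal_subst m b = {[a]}"

end

theory Submission
  imports Defs
begin

text \<open>
Every letter sits in the middle of a legal three-letter word, so every legal word extends
legally on both sides; hence the language of the RS-subshift is exactly the set of legal words.
Now let \<open>w\<close> be legal. It is a factor of a second image \<open>\<vartheta>(y)\<close>, \<open>y \<in> \<vartheta>(z)\<close>, of a legal
word \<open>z\<close>. Extend \<open>z\<close> to the right by \<open>e\<close> and substitute \<open>e\<close> deterministically
(\<open>a \<mapsto> ab, b \<mapsto> a\<close> for Fibonacci, \<open>a \<mapsto> ab, b \<mapsto> ac, c \<mapsto> a\<close> for tribonacci,
\<open>a \<mapsto> a\<^sup>mb, b \<mapsto> a\<close> for the metallic means); the result never contains \<open>bb\<close>
(resp. \<open>cc\<close>). Substituting once more, the images of this word can be chosen letter by letter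
so that a word of \<open>S\<close> starts at any prescribed position: inside the image of a letter \<open>c\<close> this
only depends on \<open>c\<close> and a few following letters, and the excluded factor rules out the one
bad configuration. So \<open>w u s\<close> is legal for some \<open>s \<in> S\<close> and every sufficiently long
length of \<open>u\<close>.
\<close>

lemma Cons_in_subst_word: "u \<in> \<theta> c \<Longrightarrow> v \<in> subst_word \<theta> p \<Longrightarrow> u @ v \<in> subst_word \<theta> (c # p)"
  by auto

lemma bex_subst_word_Cons:
  "(\<exists>x\<in>subst_word \<theta> (c # p). P x) \<longleftrightarrow> (\<exists>u\<in>\<theta> c. \<exists>v\<in>subst_word \<theta> p. P (u @ v))"
  by auto

lemma subst_word_singleton [simp]: "subst_word \<theta> [c] = \<theta> c"
  by auto

lemma append_in_subst_word:
  "x \<in> subst_word \<theta> p \<Longrightarrow> y \<in> subst_word \<theta> q \<Longrightarrow> x @ y \<in> subst_word \<theta> (p @ q)"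
proof (induction p arbitrary: x)
  case (Cons c p)
  then obtain u v where "x = u @ v" "u \<in> \<theta> c" "v \<in> subst_word \<theta> p" by auto
  with Cons.IH[of v] Cons.prems(2) show ?case by auto
qed simp

lemma concat_map_in_subst_word: "(\<And>c. g c \<in> \<theta> c) \<Longrightarrow> concat (map g p) \<in> subst_word \<theta> p"
  by (induction p) auto

lemma subst_pow_Suc: "subst_pow \<theta> (Suc k) X = (\<Union>y\<in>subst_pow \<theta> k X. subst_word \<theta> y)"
  by (simp add: subst_pow_def subst_set_def)

lemma subst_pow_0 [simp]: "subst_pow \<theta> 0 X = X"
  by (simp add: subst_pow_def)

lemma append_in_subst_pow:
  "x \<in> subst_pow \<theta> k {p} \<Longrightarrow> y \<in> subst_pow \<theta> k {q} \<Longrightarrow> x @ y \<in> subst_pow \<theta> k {p @ q}"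
proof (induction k arbitrary: x y)
  case (Suc k)
  then obtain x0 y0 where "x0 \<in> subst_pow \<theta> k {p}" "x \<in> subst_word \<theta> x0"
      "y0 \<in> subst_pow \<theta> k {q}" "y \<in> subst_word \<theta> y0"
    by (auto simp: subst_pow_Suc)
  with Suc.IH show ?case by (auto simp: subst_pow_Suc intro: append_in_subst_word)
qed simp

lemma legalI: "v \<in> subst_pow \<theta> k {[c]} \<Longrightarrow> sublist u v \<Longrightarrow> legal \<theta> u"
  unfolding legal_def by blast

lemma legal_letter: "legal \<theta> [c]"
  by (rule legalI[of "[c]" _ 0]) auto

lemma legal_sublist: "legal \<theta> w \<Longrightarrow> sublist u w \<Longrightarrow> legal \<theta> u"
  unfolding legal_def by (meson sublist_order.order.trans)

lemma legal_in_image_of_legal: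
  assumes "legal \<theta> w" "2 \<le> length w"
  shows "\<exists>z y. legal \<theta> z \<and> y \<in> subst_word \<theta> z \<and> sublist w y"
proof -
  obtain k c v where v: "v \<in> subst_pow \<theta> k {[c]}" "sublist w v"
    using assms(1) unfolding legal_def by blast
  have "k \<noteq> 0"
    using v assms(2) sublist_length_le[OF v(2)] by (cases k) auto
  then obtain k' where "k = Suc k'" by (cases k) auto
  then obtain z where "z \<in> subst_pow \<theta> k' {[c]}" "v \<in> subst_word \<theta> z"
    using v(1) by (auto simp: subst_pow_Suc)
  with v(2) show ?thesis by (blast intro: legalI)
qed

definition occurs_at :: "'a list set \<Rightarrow> nat \<Rightarrow> 'a list \<Rightarrow> bool" where
  "occurs_at S q x \<longleftrightarrow> (\<exists>u s v. x = u @ s @ v \<and> length u = q \<and> s \<in> S)"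

lemma occurs_at_append_right: "occurs_at S q x \<Longrightarrow> occurs_at S q (x @ y)"
  unfolding occurs_at_def by fastforce

lemma occurs_at_append_left: "occurs_at S q x \<Longrightarrow> occurs_at S (length y + q) (y @ x)"
  unfolding occurs_at_def by (metis append.assoc length_append)

lemma occurs_at_iff_prefix_drop: "occurs_at S q x \<longleftrightarrow> q \<le> length x \<and> (\<exists>s\<in>S. prefix s (drop q x))"
proof
  assume "occurs_at S q x"
  then obtain u s v where "x = u @ s @ v" "length u = q" "s \<in> S"
    unfolding occurs_at_def by blast
  then show "q \<le> length x \<and> (\<exists>s\<in>S. prefix s (drop q x))"
    by (auto intro!: bexI[of _ s])
next
  assume "q \<le> length x \<and> (\<exists>s\<in>S. prefix s (drop q x))"
  then obtain s v where "q \<le> length x" "s \<in> S" "drop q x = s @ v"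
    by (auto simp: prefix_def)
  then have "x = take q x @ s @ v" "length (take q x) = q"
    by (metis append_take_drop_id, simp)
  with \<open>s \<in> S\<close> show "occurs_at S q x"
    unfolding occurs_at_def by blast
qed

locale random_substitution =
  fixes \<theta> :: "'a \<Rightarrow> 'a list set"
  assumes image_nonempty: "\<theta> c \<noteq> {}"
    and Nil_notin_image: "[] \<notin> \<theta> c"
begin

lemma subst_word_nonempty: "\<exists>x. x \<in> subst_word \<theta> p"
proof (induction p)
  case (Cons c p)
  then obtain v where "v \<in> subst_word \<theta> p" by blast
  moreover obtain u where "u \<in> \<theta> c" using image_nonempty by blast
  ultimately show ?case by (blast intro: Cons_in_subst_word)
qed simp

lemma subst_pow_nonempty: "\<exists>x. x \<in> subst_pow \<theta> k {p}"
proof (induction k)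
  case (Suc k)
  then obtain y where "y \<in> subst_pow \<theta> k {p}" by blast
  with subst_word_nonempty[of y] show ?case by (auto simp: subst_pow_Suc)
qed simp

lemma length_le_subst_word: "x \<in> subst_word \<theta> p \<Longrightarrow> length p \<le> length x"
proof (induction p arbitrary: x)
  case (Cons c p)
  then obtain u v where "x = u @ v" "u \<in> \<theta> c" "v \<in> subst_word \<theta> p" by auto
  with Cons.IH Nil_notin_image[of c] show ?case by (cases u) fastforce+
qed simp

lemma length_le_subst_pow: "x \<in> subst_pow \<theta> k {p} \<Longrightarrow> length p \<le> length x"
proof (induction k arbitrary: x)
  case (Suc k)
  then obtain y where "y \<in> subst_pow \<theta> k {p}" "x \<in> subst_word \<theta> y" by (auto simp: subst_pow_Suc)
  with Suc.IH length_le_subst_word show ?case by (meson order.trans)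
qed simp

lemma sublist_in_subst_word:
  assumes "sublist p q" "x \<in> subst_word \<theta> p"
  shows "\<exists>y\<in>subst_word \<theta> q. sublist x y"
proof -
  obtain q1 q2 where "q = q1 @ p @ q2" using assms(1) by (auto simp: sublist_def)
  moreover obtain y1 y2 where "y1 \<in> subst_word \<theta> q1" "y2 \<in> subst_word \<theta> q2"
    using subst_word_nonempty by blast
  ultimately have "y1 @ x @ y2 \<in> subst_word \<theta> q"
    using assms(2) by (simp add: append_in_subst_word)
  then show ?thesis by blast
qed

lemma legal_image: "legal \<theta> z \<Longrightarrow> y \<in> subst_word \<theta> z \<Longrightarrow> legal \<theta> y"
proof -
  assume "legal \<theta> z" "y \<in> subst_word \<theta> z"
  then obtain k c v y' where "v \<in> subst_pow \<theta> k {[c]}" "y' \<in> subst_word \<theta> v" "sublist y y'"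
    unfolding legal_def by (meson sublist_in_subst_word)
  moreover from this have "y' \<in> subst_pow \<theta> (Suc k) {[c]}" by (auto simp: subst_pow_Suc)
  ultimately show ?thesis by (blast intro: legalI)
qed

lemma legal_subst_pow: "legal \<theta> z \<Longrightarrow> y \<in> subst_pow \<theta> k {z} \<Longrightarrow> legal \<theta> y"
  by (induction k arbitrary: y) (auto simp: subst_pow_Suc intro: legal_image)

end

locale legally_surrounded = random_substitution +
  assumes letter_surrounded: "\<exists>c1 c2. legal \<theta> [c1, c, c2]"
begin

text \<open>If \<open>w\<close> is a factor of a level-\<open>k\<close> image of \<open>c\<close>, then the level-\<open>k\<close> image
of a legal word \<open>c1 c c2\<close> contains it with a nonempty word on either side.\<close>
lemma legal_extend:
  assumes "legal \<theta> w"
  shows "\<exists>c d. legal \<theta> (c # w @ [d])"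
proof -
  obtain k c v where v: "v \<in> subst_pow \<theta> k {[c]}" "sublist w v"
    using assms unfolding legal_def by blast
  obtain c1 c2 where c12: "legal \<theta> [c1, c, c2]" using letter_surrounded by blast
  obtain v1 v2 where v1: "v1 \<in> subst_pow \<theta> k {[c1]}" and v2: "v2 \<in> subst_pow \<theta> k {[c2]}"
    using subst_pow_nonempty by blast
  have "(v1 @ v) @ v2 \<in> subst_pow \<theta> k {([c1] @ [c]) @ [c2]}"
    using v1 v(1) v2 by (intro append_in_subst_pow)
  then have legal: "legal \<theta> (v1 @ v @ v2)"
    using c12 by (auto intro: legal_subst_pow)
  have "v1 \<noteq> []" "v2 \<noteq> []"
    using length_le_subst_pow[OF v1] length_le_subst_pow[OF v2] by auto
  moreover obtain s t where "v = s @ w @ t" using v(2) by (auto simp: sublist_def)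
  ultimately obtain c' p d' q where "v1 @ s = p @ [c']" "t @ v2 = d' # q"
    by (cases "v1 @ s" rule: rev_cases; cases "t @ v2") auto
  with \<open>v = s @ w @ t\<close> have "v1 @ v @ v2 = p @ (c' # w @ [d']) @ q"
    by (metis append.assoc append_Cons append_Nil)
  then have "sublist (c' # w @ [d']) (v1 @ v @ v2)" by (metis sublist_appendI)
  then show ?thesis using legal_sublist[OF legal] by blast
qed

lemma legal_extend_right: "legal \<theta> z \<Longrightarrow> \<exists>e. length e = n \<and> legal \<theta> (z @ e)"
proof (induction n)
  case (Suc n)
  then obtain e where e: "length e = n" "legal \<theta> (z @ e)" by blast
  then obtain c d where "legal \<theta> (c # (z @ e) @ [d])" using legal_extend by blast
  then have "legal \<theta> (z @ e @ [d])"
    by (rule legal_sublist) (metis append.assoc append_Cons append_Nil sublist_append_leftI)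
  with e(1) show ?case by (intro exI[of _ "e @ [d]"]) simp
qed (auto intro: exI[of _ "[]"])

lemma legal_in_image:
  assumes "legal \<theta> w"
  shows "\<exists>z y. legal \<theta> z \<and> y \<in> subst_word \<theta> z \<and> sublist w y"
proof -
  obtain c d where "legal \<theta> (c # w @ [d])" using legal_extend[OF assms] by blast
  then obtain z y where "legal \<theta> z" "y \<in> subst_word \<theta> z" "sublist (c # w @ [d]) y"
    using legal_in_image_of_legal[of \<theta> "c # w @ [d]"] by auto
  moreover have "sublist w (c # w @ [d])"
    by (metis append_Cons append_Nil sublist_appendI)
  ultimately show ?thesis by (meson sublist_order.order.trans)
qed

definition grow :: "'a list \<Rightarrow> 'a list" where
  "grow u = (SOME v. \<exists>c d. v = c # u @ [d] \<and> legal \<theta> v)"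

lemma grow: "legal \<theta> u \<Longrightarrow> \<exists>c d. grow u = c # u @ [d] \<and> legal \<theta> (grow u)"
  unfolding grow_def by (rule someI_ex) (use legal_extend in blast)

lemma legal_grow_iter: "legal \<theta> u \<Longrightarrow> legal \<theta> ((grow ^^ j) u)"
  by (induction j) (use grow in auto)

lemma grow_iter:
  "legal \<theta> u \<Longrightarrow> \<exists>l r. (grow ^^ j) u = l @ u @ r \<and> length l = j \<and> length r = j"
proof (induction j)
  case (Suc j)
  then obtain l r where "(grow ^^ j) u = l @ u @ r" "length l = j" "length r = j" by blast
  moreover obtain c d where "grow ((grow ^^ j) u) = c # (grow ^^ j) u @ [d]"
    using grow legal_grow_iter Suc.prems by blast
  ultimately show ?case by (intro exI[of _ "c # l"] exI[of _ "r @ [d]"]) simp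
qed simp

lemma length_grow_iter: "legal \<theta> u \<Longrightarrow> length ((grow ^^ j) u) = length u + 2 * j"
  using grow_iter[of u j] by auto

text \<open>The words \<open>(grow ^^ j) w\<close> are nested, each centred in the next; position \<open>i\<close>
of the limit point is read off at level \<open>|i| + 1\<close>, where it is defined and never changes again.\<close>
definition limit_point :: "'a list \<Rightarrow> int \<Rightarrow> 'a" where
  "limit_point w i = (grow ^^ Suc (nat \<bar>i\<bar>)) w ! nat (i + int (Suc (nat \<bar>i\<bar>)))"

lemma limit_point_eq:
  assumes "legal \<theta> w" "nat \<bar>i\<bar> < T"
  shows "limit_point w i = (grow ^^ T) w ! nat (i + int T)"
proof -
  define J where "J = Suc (nat \<bar>i\<bar>)"
  define W where "W = (grow ^^ J) w"
  obtain l r where lr: "(grow ^^ (T - J)) W = l @ W @ r" "length l = T - J"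
    using grow_iter[OF legal_grow_iter[OF assms(1)]] unfolding W_def by blast
  have "T = (T - J) + J" using assms(2) unfolding J_def by simp
  then have "(grow ^^ T) w = l @ W @ r"
    using lr(1) unfolding W_def by (metis funpow_add comp_apply)
  moreover have "nat (i + int T) = length l + nat (i + int J)"
    using assms(2) lr(2) unfolding J_def by arith
  moreover have "nat (i + int J) < length W"
    unfolding W_def length_grow_iter[OF assms(1)] J_def by (simp add: nat_less_iff)
  ultimately have "(grow ^^ T) w ! nat (i + int T) = W ! nat (i + int J)"
    by (simp add: nth_append)
  then show ?thesis by (simp add: limit_point_def W_def J_def)
qed

lemma window_limit_point:
  assumes "legal \<theta> w" "nat \<bar>i\<bar> + n < T"
  shows "window (limit_point w) i n = take n (drop (nat (i + int T)) ((grow ^^ T) w))"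
proof (rule nth_equalityI)
  show "length (window (limit_point w) i n)
      = length (take n (drop (nat (i + int T)) ((grow ^^ T) w)))"
    using assms length_grow_iter[OF assms(1), of T] by (simp add: window_def)
next
  fix j assume "j < length (window (limit_point w) i n)"
  then have j: "j < n" by (simp add: window_def)
  then have "limit_point w (i + int j) = (grow ^^ T) w ! nat (i + int j + int T)"
    using assms by (intro limit_point_eq) auto
  moreover have "nat (i + int j + int T) = nat (i + int T) + j"
    using assms(2) by auto
  moreover have "nat (i + int T) + j < length ((grow ^^ T) w)"
    using assms j length_grow_iter[OF assms(1), of T] by auto
  ultimately show
    "window (limit_point w) i n ! j = take n (drop (nat (i + int T)) ((grow ^^ T) w)) ! j"
    using j by (simp add: window_def)
qed

lemma RS_language_eq: "RS_language \<theta> = {w. legal \<theta> w}"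
proof
  show "RS_language \<theta> \<subseteq> {w. legal \<theta> w}"
    unfolding RS_language_def RS_subshift_def by blast
next
  show "{w. legal \<theta> w} \<subseteq> RS_language \<theta>"
  proof
    fix w assume "w \<in> {w. legal \<theta> w}"
    then have w: "legal \<theta> w" by simp
    have "legal \<theta> (window (limit_point w) i n)" for i n
    proof -
      define T where "T = nat \<bar>i\<bar> + n + 1"
      have "window (limit_point w) i n = take n (drop (nat (i + int T)) ((grow ^^ T) w))"
        by (rule window_limit_point[OF w]) (simp add: T_def)
      also have "sublist \<dots> ((grow ^^ T) w)"
        by (meson sublist_order.order.trans sublist_take sublist_drop)
      finally show ?thesis by (rule legal_sublist[OF legal_grow_iter[OF w]])
    qed
    then have "window (limit_point w) 0 (length w) \<in> RS_language \<theta>"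
      unfolding RS_language_def RS_subshift_def by blast
    moreover obtain l r where "(grow ^^ Suc (length w)) w = l @ w @ r" "length l = Suc (length w)"
      using grow_iter[OF w] by blast
    then have "window (limit_point w) 0 (length w) = w"
      using window_limit_point[OF w, of 0 "length w" "Suc (length w)"] by simp
    ultimately show "w \<in> RS_language \<theta>" by simp
  qed
qed

end

subsection \<open>A criterion for semi-mixing\<close>

text \<open>\<open>Q\<close> is a constraint met by all \<open>g\<close>-images (in the examples: no factor \<open>bb\<close>,
resp. \<open>cc\<close>), which \<open>local_occurrence\<close> may exploit on a letter and the \<open>K\<close> letters after it.\<close>
locale semi_mixing_criterion = legally_surrounded +
  fixes g :: "'a \<Rightarrow> 'a list" and Q :: "'a list \<Rightarrow> bool" and K :: nat and S :: "'a list set"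
  assumes g_in_image: "g c \<in> \<theta> c"
    and Q_concat_map_g: "Q (concat (map g e))"
    and Q_factor: "Q (u @ v @ w) \<Longrightarrow> Q v"
    and local_occurrence: "length r = K \<Longrightarrow> Q (c # r) \<Longrightarrow> y \<in> \<theta> c \<Longrightarrow> q < length y \<Longrightarrow>
      \<exists>x\<in>subst_word \<theta> (c # r). occurs_at S q x"
begin

lemma image_occurs_at: "Q v \<Longrightarrow> p + K < length v \<Longrightarrow> \<exists>x\<in>subst_word \<theta> v. occurs_at S p x"
proof (induction v arbitrary: p)
  case (Cons c v)
  obtain y where y: "y \<in> \<theta> c" using image_nonempty by blast
  show ?case
  proof (cases "p < length y")
    case True
    have "Q (c # take K v)"
      using Q_factor[of "[]" "c # take K v" "drop K v"] Cons.prems(1) by simp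
    moreover have "length (take K v) = K" using Cons.prems(2) by simp
    ultimately obtain x where x: "x \<in> subst_word \<theta> (c # take K v)" "occurs_at S p x"
      using local_occurrence y True by blast
    obtain x' where "x' \<in> subst_word \<theta> (drop K v)" using subst_word_nonempty by blast
    then have "x @ x' \<in> subst_word \<theta> ((c # take K v) @ drop K v)"
      using x(1) by (rule append_in_subst_word[rotated])
    then show ?thesis using occurs_at_append_right[OF x(2)] by auto
  next
    case False
    have "Q v" using Q_factor[of "[c]" v "[]"] Cons.prems(1) by simp
    moreover have "y \<noteq> []" using y Nil_notin_image by blast
    then have "p - length y + K < length v" using False Cons.prems(2) by (cases y) auto
    ultimately obtain x where "x \<in> subst_word \<theta> v" "occurs_at S (p - length y) x"
      using Cons.IH by blast
    moreover have "length y + (p - length y) = p" using False by simp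
    ultimately have "y @ x \<in> subst_word \<theta> (c # v)" "occurs_at S p (y @ x)"
      using y occurs_at_append_left[of S "p - length y" x y] by auto
    then show ?thesis by blast
  qed
qed simp

text \<open>\<open>w\<close> lies in a second image of a legal word \<open>z\<close>. Extend \<open>z\<close> to the right, substitute
the extension by \<open>g\<close> to obtain a \<open>Q\<close>-word, and substitute that word so that an element of \<open>S\<close>
appears at the required distance behind \<open>w\<close>.\<close>
lemma eventually_occurs_after:
  assumes w: "legal \<theta> w"
  shows "\<exists>N. \<forall>n\<ge>N. \<exists>u s. length u = n \<and> s \<in> S \<and> legal \<theta> (w @ u @ s)"
proof -
  obtain y0 v where y0: "legal \<theta> y0" "v \<in> subst_word \<theta> y0" "sublist w v"
    using legal_in_image[OF w] by blast
  obtain z y where z: "legal \<theta> z" "y \<in> subst_word \<theta> z" "sublist y0 y"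
    using legal_in_image[OF y0(1)] by blast
  obtain v' where v': "v' \<in> subst_word \<theta> y" "sublist v v'"
    using sublist_in_subst_word[OF z(3) y0(2)] by blast
  have "sublist w v'" using y0(3) v'(2) by (rule sublist_order.order.trans)
  then obtain v1 v3 where v1v3: "v' = v1 @ w @ v3"
    by (auto simp: sublist_def)
  show ?thesis
  proof (intro exI[of _ "length v3"] allI impI)
    fix n assume n: "length v3 \<le> n"
    obtain e where e: "length e = n - length v3 + K + 1" "legal \<theta> (z @ e)"
      using legal_extend_right[OF z(1)] by blast
    define E where "E = concat (map g e)"
    have E: "E \<in> subst_word \<theta> e"
      unfolding E_def using g_in_image by (rule concat_map_in_subst_word)
    then have "n - length v3 + K < length E"
      using length_le_subst_word[OF E] e(1) by simp
    then obtain x where x: "x \<in> subst_word \<theta> E" "occurs_at S (n - length v3) x"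
      using image_occurs_at Q_concat_map_g unfolding E_def by blast
    then obtain u s t where ust: "x = u @ s @ t" "length u = n - length v3" "s \<in> S"
      unfolding occurs_at_def by blast
    have "legal \<theta> (y @ E)"
      using legal_image[OF e(2)] append_in_subst_word[OF z(2) E] by blast
    then have "legal \<theta> (v' @ x)"
      using legal_image append_in_subst_word[OF v'(1) x(1)] by blast
    moreover have "v' @ x = v1 @ (w @ (v3 @ u) @ s) @ t"
      using v1v3 ust(1) by simp
    ultimately have "legal \<theta> (w @ (v3 @ u) @ s)"
      by (metis legal_sublist sublist_appendI)
    moreover have "length (v3 @ u) = n" using n ust(2) by simp
    ultimately show "\<exists>u s. length u = n \<and> s \<in> S \<and> legal \<theta> (w @ u @ s)"
      using ust(3) by blast
  qed
qed

lemma semi_mixing_wrtI: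
  assumes S: "\<And>s. s \<in> S \<Longrightarrow> legal \<theta> s \<and> length s = l"
    and t: "legal \<theta> t" "length t = l" "t \<notin> S"
  shows "semi_mixing_wrt \<theta> S"
proof -
  have "S \<subset> {w \<in> RS_language \<theta>. length w = l}"
    using S t unfolding RS_language_eq by blast
  then show ?thesis
    unfolding semi_mixing_wrt_def RS_language_eq using eventually_occurs_after by auto
qed

end

lemma not_sublist_pair_concat_map:
  assumes "\<And>c. \<not> sublist [f, f] (g c)" "\<And>c. \<not> prefix [f] (g c)"
  shows "\<not> sublist [f, f] (concat (map g xs))"
proof -
  have "\<not> sublist [f, f] (concat (map g xs)) \<and> \<not> prefix [f] (concat (map g xs))"
  proof (induction xs)
    case (Cons c xs)
    then show ?case
      using assms[of c]
      by (auto simp: sublist_append prefix_append Cons_eq_append_conv append_eq_Cons_conv)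
  qed simp
  then show ?thesis ..
qed

lemma not_sublist_infix: "\<not> sublist t (u @ v @ w) \<Longrightarrow> \<not> sublist t v"
  by (meson sublist_appendI sublist_order.order.trans)

lemma not_sublist_pair_replicate: "x \<noteq> f \<Longrightarrow> \<not> sublist [f, f] (replicate n x @ [f])"
  by (induction n) (auto simp: sublist_Cons_right dest: sublist_length_le)

subsection \<open>Random Fibonacci and tribonacci substitutions\<close>

lemma fib_semi_mixing: "semi_mixing_wrt fib_subst {[a, b], [b, a]}"
proof -
  interpret random_substitution fib_subst
  proof
    show "fib_subst c \<noteq> {}" "[] \<notin> fib_subst c" for c by (cases c; simp)+
  qed
  have ab: "legal fib_subst [a, b]" and ba: "legal fib_subst [b, a]"
    using legal_image[OF legal_letter, of _ a] by auto
  have aba: "legal fib_subst [a, b, a]"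
    by (rule legal_image[OF ab], rule Cons_in_subst_word[where u = "[a, b]", unfolded append_Cons append_Nil])
      simp_all
  have aab: "legal fib_subst [a, a, b]"
    by (rule legal_image[OF ba], rule Cons_in_subst_word[where u = "[a]", unfolded append_Cons append_Nil])
      simp_all
  interpret legally_surrounded fib_subst
  proof
    show "\<exists>c1 c2. legal fib_subst [c1, c, c2]" for c using aba aab by (cases c) blast+
  qed
  interpret semi_mixing_criterion fib_subst "\<lambda>c. case c of a \<Rightarrow> [a, b] | b \<Rightarrow> [a]"
    "\<lambda>w. \<not> sublist [b, b] w" 1 "{[a, b], [b, a]}"
  proof
    show "(case c of a \<Rightarrow> [a, b] | b \<Rightarrow> [a]) \<in> fib_subst c" for c by (cases c) auto
    show "\<not> sublist [b, b] (concat (map (\<lambda>c. case c of a \<Rightarrow> [a, b] | b \<Rightarrow> [a]) e))" for e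
      by (rule not_sublist_pair_concat_map) (auto split: ab.split simp: sublist_code(3))
    show "\<not> sublist [b, b] (u @ v @ w) \<Longrightarrow> \<not> sublist [b, b] v" for u v w
      by (rule not_sublist_infix)
    show "\<exists>x\<in>subst_word fib_subst (c # r). occurs_at {[a, b], [b, a]} q x"
      if r: "length r = 1" and cr: "\<not> sublist [b, b] (c # r)" "y \<in> fib_subst c" "q < length y"
      for c r y q
    proof -
      obtain d where d: "r = [d]" using r by (cases r) auto
      show ?thesis using cr unfolding d bex_subst_word_Cons
        by (cases c; cases d) (auto simp: occurs_at_iff_prefix_drop sublist_code(3) less_Suc_eq)
    qed
  qed
  show ?thesis
  proof (rule semi_mixing_wrtI[where t = "[a, a]"])
    show "legal fib_subst s \<and> length s = 2" if "s \<in> {[a, b], [b, a]}" for s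
      using that legal_sublist[OF aba] by (auto simp: sublist_code(3))
    show "legal fib_subst [a, a]" using legal_sublist[OF aab] by (simp add: sublist_code(3))
  qed simp_all
qed

lemma trib_semi_mixing: "semi_mixing_wrt trib_subst {[A, B], [B, A], [A, C], [C, A]}"
proof -
  interpret random_substitution trib_subst
  proof
    show "trib_subst c \<noteq> {}" "[] \<notin> trib_subst c" for c by (cases c; simp)+
  qed
  have AB: "legal trib_subst [A, B]" and BA: "legal trib_subst [B, A]"
    using legal_image[OF legal_letter, of _ A] by auto
  have ABAC: "legal trib_subst [A, B, A, C]"
    by (rule legal_image[OF AB], rule Cons_in_subst_word[where u = "[A, B]", unfolded append_Cons append_Nil])
      simp_all
  have ACAB: "legal trib_subst [A, C, A, B]"
    by (rule legal_image[OF BA], rule Cons_in_subst_word[where u = "[A, C]", unfolded append_Cons append_Nil])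
      simp_all
  have CAAB: "legal trib_subst [C, A, A, B]"
    by (rule legal_image[OF BA], rule Cons_in_subst_word[where u = "[C, A]", unfolded append_Cons append_Nil])
      simp_all
  interpret legally_surrounded trib_subst
  proof
    have "legal trib_subst [B, A, C]" "legal trib_subst [A, B, A]" "legal trib_subst [A, C, A]"
      using legal_sublist[OF ABAC] legal_sublist[OF ACAB] by (simp_all add: sublist_code(3))
    then show "\<exists>c1 c2. legal trib_subst [c1, c, c2]" for c by (cases c) blast+
  qed
  interpret semi_mixing_criterion trib_subst "\<lambda>c. case c of A \<Rightarrow> [A, B] | B \<Rightarrow> [A, C] | C \<Rightarrow> [A]"
    "\<lambda>w. \<not> sublist [C, C] w" 1 "{[A, B], [B, A], [A, C], [C, A]}"
  proof
    show "(case c of A \<Rightarrow> [A, B] | B \<Rightarrow> [A, C] | C \<Rightarrow> [A]) \<in> trib_subst c" for c by (cases c) auto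
    show "\<not> sublist [C, C] (concat (map (\<lambda>c. case c of A \<Rightarrow> [A, B] | B \<Rightarrow> [A, C] | C \<Rightarrow> [A]) e))"
      for e by (rule not_sublist_pair_concat_map) (auto split: abc.split simp: sublist_code(3))
    show "\<not> sublist [C, C] (u @ v @ w) \<Longrightarrow> \<not> sublist [C, C] v" for u v w
      by (rule not_sublist_infix)
    show "\<exists>x\<in>subst_word trib_subst (c # r). occurs_at {[A, B], [B, A], [A, C], [C, A]} q x"
      if r: "length r = 1" and cr: "\<not> sublist [C, C] (c # r)" "y \<in> trib_subst c" "q < length y"
      for c r y q
    proof -
      obtain d where d: "r = [d]" using r by (cases r) auto
      show ?thesis using cr unfolding d bex_subst_word_Cons
        by (cases c; cases d) (auto simp: occurs_at_iff_prefix_drop sublist_code(3) less_Suc_eq)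
    qed
  qed
  show ?thesis
  proof (rule semi_mixing_wrtI[where t = "[A, A]"])
    show "legal trib_subst s \<and> length s = 2" if "s \<in> {[A, B], [B, A], [A, C], [C, A]}" for s
      using that legal_sublist[OF ABAC] legal_sublist[OF ACAB] by (auto simp: sublist_code(3))
    show "legal trib_subst [A, A]" using legal_sublist[OF CAAB] by (simp add: sublist_code(3))
  qed simp_all
qed

subsection \<open>Random metallic mean substitutions\<close>

lemma metal_subst_a_mem: "i \<le> m \<Longrightarrow> replicate i a @ [b] @ replicate (m - i) a \<in> metal_subst m a"
  by auto

definition metal_choice :: "nat \<Rightarrow> ab \<Rightarrow> ab list" where
  "metal_choice m c = (case c of a \<Rightarrow> replicate m a @ [b] | b \<Rightarrow> [a])"

lemma replicate_b_in_metal_subst: "replicate m a @ [b] \<in> metal_subst m a"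
  by (auto intro: exI[of _ m])

lemma metal_choice_in_image: "metal_choice m c \<in> metal_subst m c"
  by (cases c) (simp_all only: metal_choice_def ab.case replicate_b_in_metal_subst, simp)

lemma replicate_prefix_concat_metal_choice:
  "q \<le> m \<Longrightarrow> q \<le> length r \<Longrightarrow> prefix (replicate q a) (concat (map (metal_choice m) r))"
proof (induction r arbitrary: q)
  case (Cons c r)
  show ?case
  proof (cases c)
    case a
    have "replicate m a = replicate q a @ replicate (m - q) a"
      using Cons.prems(1) by (simp flip: replicate_add)
    then show ?thesis using a by (simp add: metal_choice_def)
  next
    case b
    then show ?thesis
      using Cons by (cases q) (auto simp: metal_choice_def)
  qed
qed simp

lemma metal_local_occurrence:
  assumes m: "2 \<le> m" and r: "length r = m" and cr: "\<not> sublist [b, b] (c # r)"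
    and y: "y \<in> metal_subst m c" and q: "q < length y"
  shows "\<exists>x\<in>subst_word (metal_subst m) (c # r). occurs_at (metal_subst m a) q x"
proof (cases c)
  case a
  with y q have "q \<le> m" by auto
  define D where "D = concat (map (metal_choice m) r)"
  have D: "D \<in> subst_word (metal_subst m) r"
    unfolding D_def by (rule concat_map_in_subst_word[OF metal_choice_in_image])
  have "prefix (replicate q a) D"
    unfolding D_def using \<open>q \<le> m\<close> r by (intro replicate_prefix_concat_metal_choice) auto
  then obtain D' where D': "D = replicate q a @ D'" by (auto simp: prefix_def)
  define s where "s = replicate (m - q) a @ [b] @ replicate (m - (m - q)) a"
  have "s \<in> metal_subst m a" unfolding s_def by (rule metal_subst_a_mem) simp
  moreover have "(replicate m a @ [b]) @ D = replicate q a @ s @ D'"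
    using \<open>q \<le> m\<close> by (simp add: D' s_def flip: replicate_add)
  ultimately have "occurs_at (metal_subst m a) q ((replicate m a @ [b]) @ D)"
    unfolding occurs_at_def by (metis length_replicate)
  moreover have "(replicate m a @ [b]) @ D \<in> subst_word (metal_subst m) (c # r)"
    using replicate_b_in_metal_subst D unfolding a by (rule Cons_in_subst_word)
  ultimately show ?thesis by blast
next
  case b
  with y q have "q = 0" by auto
  obtain d r' where "r = d # r'" using r m by (cases r) auto
  with cr b have r': "r = a # r'" by (cases d) auto
  define D where "D = concat (map (metal_choice m) r')"
  have D: "D \<in> subst_word (metal_subst m) r'"
    unfolding D_def by (rule concat_map_in_subst_word[OF metal_choice_in_image])
  define s where "s = replicate m a @ [b] @ replicate (m - m) a"
  have "replicate (m - 1) a @ [b] @ replicate (m - (m - 1)) a \<in> metal_subst m a"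
    by (rule metal_subst_a_mem) simp
  then have "(replicate (m - 1) a @ [b] @ replicate (m - (m - 1)) a) @ D
      \<in> subst_word (metal_subst m) r"
    using D unfolding r' by (rule Cons_in_subst_word)
  then have "[a] @ (replicate (m - 1) a @ [b] @ replicate (m - (m - 1)) a) @ D
      \<in> subst_word (metal_subst m) (c # r)"
    unfolding b by (rule Cons_in_subst_word[rotated]) simp
  moreover have "[a] @ (replicate (m - 1) a @ [b] @ replicate (m - (m - 1)) a) @ D = s @ a # D"
    using m by (cases m) (simp_all add: s_def)
  ultimately have "s @ a # D \<in> subst_word (metal_subst m) (c # r)" by metis
  moreover have "s \<in> metal_subst m a" unfolding s_def by (rule metal_subst_a_mem) simp
  then have "occurs_at (metal_subst m a) 0 ([] @ s @ a # D)"
    unfolding occurs_at_def by blast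
  ultimately show ?thesis using \<open>q = 0\<close> by (metis append_Nil)
qed

lemma metal_semi_mixing:
  assumes m: "2 \<le> m"
  shows "semi_mixing_wrt (metal_subst m) (metal_subst m a)"
proof -
  interpret random_substitution "metal_subst m"
  proof
    show "metal_subst m c \<noteq> {}" "[] \<notin> metal_subst m c" for c by (cases c; auto)+
  qed
  have image_a: "legal (metal_subst m) y" if "y \<in> metal_subst m a" for y
    by (rule legal_image[OF legal_letter[of _ a]]) (simp only: subst_word_singleton that)
  have "replicate 0 a @ [b] @ replicate (m - 0) a \<in> metal_subst m a"
    "replicate 1 a @ [b] @ replicate (m - 1) a \<in> metal_subst m a"
    using m by (intro metal_subst_a_mem; simp)+
  moreover have "replicate (m - 0) a = a # a # replicate (m - 2) a"
    "replicate (m - 1) a = a # replicate (m - 2) a"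
    using m by (simp_all add: numeral_eq_Suc flip: replicate_Suc)
  ultimately have baa: "legal (metal_subst m) (b # a # a # replicate (m - 2) a)"
    and aba: "legal (metal_subst m) (a # b # a # replicate (m - 2) a)"
    using image_a by auto
  interpret legally_surrounded "metal_subst m"
  proof
    have "legal (metal_subst m) [b, a, a]" "legal (metal_subst m) [a, b, a]"
      using legal_sublist[OF baa] legal_sublist[OF aba] by simp_all
    then show "\<exists>c1 c2. legal (metal_subst m) [c1, c, c2]" for c by (cases c) blast+
  qed
  interpret semi_mixing_criterion "metal_subst m" "metal_choice m" "\<lambda>w. \<not> sublist [b, b] w" m
    "metal_subst m a"
  proof
    show "metal_choice m c \<in> metal_subst m c" for c by (rule metal_choice_in_image)
    have "replicate m a = a # replicate (m - 1) a" using m by (cases m) auto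
    then show "\<not> sublist [b, b] (concat (map (metal_choice m) e))" for e
      by (intro not_sublist_pair_concat_map)
        (auto simp: metal_choice_def sublist_code(3) not_sublist_pair_replicate split: ab.split)
    show "\<not> sublist [b, b] (u @ v @ w) \<Longrightarrow> \<not> sublist [b, b] v" for u v w
      by (rule not_sublist_infix)
  qed (rule metal_local_occurrence[OF m])
  have "legal (metal_subst m) [b, a]" using legal_sublist[OF baa] by simp
  moreover have "[a] @ (replicate m a @ [b]) \<in> subst_word (metal_subst m) [b, a]"
    by (rule Cons_in_subst_word) (simp, simp only: subst_word_singleton replicate_b_in_metal_subst)
  ultimately have "legal (metal_subst m) (replicate (Suc m) a @ [b])"
    using legal_image by fastforce
  then have "legal (metal_subst m) (replicate (Suc m) a)"
    by (rule legal_sublist) simp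
  moreover have "replicate (Suc m) a \<notin> metal_subst m a"
  proof
    assume "replicate (Suc m) a \<in> metal_subst m a"
    then obtain i where "replicate (Suc m) a = replicate i a @ [b] @ replicate (m - i) a" by auto
    then have "b \<in> set (replicate (Suc m) a)" by simp
    then show False by simp
  qed
  ultimately show ?thesis
  proof (intro semi_mixing_wrtI[where t = "replicate (Suc m) a"])
    show "legal (metal_subst m) s \<and> length s = Suc m" if "s \<in> metal_subst m a" for s
      using image_a[OF that] that by auto
  qed simp_all
qed

theorem mainTheorem1:
  fixes m :: nat
  assumes "m \<ge> 2"
  shows "semi_mixing_wrt fib_subst {[a, b], [b, a]}
       \<and> semi_mixing_wrt trib_subst {[A, B], [B, A], [A, C], [C, A]}
       \<and> semi_mixing_wrt (metal_subst m) {replicate i a @ [b] @ replicate (m - i) a | i. i \<le> m}"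
proof -
  have "semi_mixing_wrt (metal_subst m) {replicate i a @ [b] @ replicate (m - i) a | i. i \<le> m}"
    using metal_semi_mixing[OF assms] by (simp only: metal_subst.simps(1))
  with fib_semi_mixing trib_semi_mixing show ?thesis by blast
qed

end
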